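(* Work in a second-order (Bayes linear) belief framework with prevision $P(\cdot)$ and $\mathrm{Var}$, $\mathrm{Cov}$ derived from it, and for random vectors $Y,W$ let $P_W(Y)=P(Y)+\mathrm{Cov}(Y,W)\mathrm{Var}(W)^{\dagger}(W-P(W))$ be the adjusted expectation ($\dagger$ = Moore–Penrose inverse). Let $Z_{ij}=\mu_i+\mathcal R_{ij}$ ($i=1,\dots,m$, $j=1,\dots,n_i$) be random vectors where each $\mathcal R_{ij}$ has $P(\mathcal R_{ij})=0$, is uncorrelated with every $\mu_k$, distinct residuals are mutually uncorrelated, and $\mathrm{Var}(\mathcal R_{ij})$ does not depend on $j$. Let $\boldsymbol\mu=\mathrm{vec}(\mu_1,\dots,\mu_m)$ and suppose the quantity of interest satisfies $X=\boldsymbol{\mathcal A}\boldsymbol\mu+\boldsymbol U$, with $\boldsymbol{\mathcal A}$ a known matrix and $\boldsymbol U$ uncorrelated with all $\mu_i$ and $\mathcal R_{ij}$. Let $\overline Z_i=\frac1{n_i}\sum_{j=1}^{n_i}Z_{ij}$, $\overline{\boldsymbol Z}=(\overline Z_1,\dots,\overline Z_m)$ and $\mathcal Z=P_{\overline{\boldsymbol Z}}(\boldsymbol\mu)$. Then $P_{\mathcal Z}(X)\to\boldsymbol{\mathcal A}\boldsymbol\mu+P(\boldsymbol U)$ as $n_i\to\infty$ for all $i$.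
   Context: Convergence is in the second-order (Bayes linear) sense, i.e. in the norm $\|Y\|^2=P(Y^\intercal Y)$; in particular $\overline Z_i\to\mu_i$ in this sense as $n_i\to\infty$. *)

theory Defs
  imports "HOL-Probability.Probability"
begin

text \<open>Second-order (Bayes linear) framework rendered on a probability space M:
  prevision P = Lebesgue expectation, random vectors are families of square-integrable
  real random variables indexed by a finite index set; matrices are functions on
  (finite) index sets.\<close>

definition sq_int :: "'a measure \<Rightarrow> ('a \<Rightarrow> real) \<Rightarrow> bool" where
  "sq_int M f \<longleftrightarrow> f \<in> borel_measurable M \<and> integrable M (\<lambda>\<omega>. (f \<omega>)\<^sup>2)"

definition prev :: "'a measure \<Rightarrow> ('a \<Rightarrow> real) \<Rightarrow> real" where
  "prev M f = integral\<^sup>L M f"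

definition bl_cov :: "'a measure \<Rightarrow> ('a \<Rightarrow> real) \<Rightarrow> ('a \<Rightarrow> real) \<Rightarrow> real" where
  "bl_cov M f g = prev M (\<lambda>\<omega>. f \<omega> * g \<omega>) - prev M f * prev M g"

definition mmul :: "'k set \<Rightarrow> ('i \<Rightarrow> 'k \<Rightarrow> real) \<Rightarrow> ('k \<Rightarrow> 'j \<Rightarrow> real) \<Rightarrow> 'i \<Rightarrow> 'j \<Rightarrow> real" where
  "mmul K A B = (\<lambda>i j. \<Sum>k\<in>K. A i k * B k j)"

definition is_MP_inverse :: "'i set \<Rightarrow> 'j set \<Rightarrow> ('i \<Rightarrow> 'j \<Rightarrow> real) \<Rightarrow> ('j \<Rightarrow> 'i \<Rightarrow> real) \<Rightarrow> bool" where
  "is_MP_inverse I J A G \<longleftrightarrow>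
     (\<forall>j i. (j \<notin> J \<or> i \<notin> I) \<longrightarrow> G j i = 0) \<and>
     (\<forall>i\<in>I. \<forall>j\<in>J. mmul I (mmul J A G) A i j = A i j) \<and>
     (\<forall>j\<in>J. \<forall>i\<in>I. mmul J (mmul I G A) G j i = G j i) \<and>
     (\<forall>i\<in>I. \<forall>i'\<in>I. mmul J A G i i' = mmul J A G i' i) \<and>
     (\<forall>j\<in>J. \<forall>j'\<in>J. mmul I G A j j' = mmul I G A j' j)"

definition MP_inv :: "'i set \<Rightarrow> 'j set \<Rightarrow> ('i \<Rightarrow> 'j \<Rightarrow> real) \<Rightarrow> 'j \<Rightarrow> 'i \<Rightarrow> real" where
  "MP_inv I J A = (THE G. is_MP_inverse I J A G)"

definition adj_exp :: "'a measure \<Rightarrow> 'j set \<Rightarrow> ('j \<Rightarrow> 'a \<Rightarrow> real) \<Rightarrow> ('i \<Rightarrow> 'a \<Rightarrow> real) \<Rightarrow> 'i \<Rightarrow> 'a \<Rightarrow> real" where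
  "adj_exp M J W Y = (\<lambda>i \<omega>.
     let G = MP_inv J J (\<lambda>j k. bl_cov M (W j) (W k)) in
     prev M (Y i) + (\<Sum>j\<in>J. \<Sum>k\<in>J. bl_cov M (Y i) (W j) * G j k * (W k \<omega> - prev M (W k))))"

end

theory Submission
  imports Defs
begin

text \<open>
  The adjusted expectation \<open>P\<^sub>W(Y)\<close> is the best affine predictor of \<open>Y\<close> from \<open>W\<close> in mean
  square. Its residual is uncorrelated with every component of \<open>W\<close>, since the covariance vector
  of \<open>Y\<close> with \<open>W\<close> annihilates the kernel of \<open>S = Var(W)\<close> and the Moore--Penrose inverse
  satisfies \<open>S S\<^sup>\<dagger> S = S\<close>; the Moore--Penrose inverse of a symmetric \<open>S\<close> is obtained from a
  symmetric generalized inverse of the positive semidefinite \<open>S\<^sup>2\<close>, which Schur complement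
  elimination provides. Optimality, used twice, bounds the error of the twice adjusted means by
  that of the sample means: for \<open>k = (i, c)\<close>,
  \<open>E(\<mu>\<^sub>k - P\<^sub>\<Z>(\<mu>\<^sub>k))\<^sup>2 \<le> E(\<mu>\<^sub>k - \<Z>\<^sub>k)\<^sup>2 \<le> E(\<mu>\<^sub>k - Zbar\<^sub>k)\<^sup>2 = Var(R\<^sub>i\<^sub>1)\<^sub>c\<^sub>c / n\<^sub>i\<close>.
  As \<open>U\<close> is uncorrelated with the data, \<open>P\<^sub>\<Z>(X) = A P\<^sub>\<Z>(\<mu>) + P(U)\<close>, and Cauchy--Schwarz
  turns the componentwise bounds into \<open>E|P\<^sub>\<Z>(X) - A \<mu> - P(U)|\<^sup>2 = O(1 / min n\<^sub>i)\<close>.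
\<close>

section \<open>Generalized inverses of positive semidefinite matrices\<close>

lemma mmul_assoc: "mmul K (mmul J A B) C = mmul J A (mmul K B C)"
  unfolding mmul_def
  by (intro ext) (simp add: sum_distrib_left sum_distrib_right mult.assoc sum.swap[of _ K J])

definition bilin_form :: "'j set \<Rightarrow> ('j \<Rightarrow> real) \<Rightarrow> ('j \<Rightarrow> 'j \<Rightarrow> real) \<Rightarrow> ('j \<Rightarrow> real) \<Rightarrow> real" where
  "bilin_form J x T y = (\<Sum>p\<in>J. \<Sum>q\<in>J. x p * T p q * y q)"

definition symmetric_on :: "'j set \<Rightarrow> ('j \<Rightarrow> 'j \<Rightarrow> real) \<Rightarrow> bool" where
  "symmetric_on J S \<longleftrightarrow> (\<forall>i\<in>J. \<forall>j\<in>J. S i j = S j i)"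

definition psd_on :: "'j set \<Rightarrow> ('j \<Rightarrow> 'j \<Rightarrow> real) \<Rightarrow> bool" where
  "psd_on J S \<longleftrightarrow> (\<forall>v. 0 \<le> bilin_form J v S v)"

definition ginverse_on :: "'j set \<Rightarrow> ('j \<Rightarrow> 'j \<Rightarrow> real) \<Rightarrow> ('j \<Rightarrow> 'j \<Rightarrow> real) \<Rightarrow> bool" where
  "ginverse_on J S T \<longleftrightarrow> (\<forall>i\<in>J. \<forall>j\<in>J. mmul J (mmul J S T) S i j = S i j)"

lemma mmul_mmul_eq_bilin_form: "mmul J (mmul J S T) S i j = bilin_form J (S i) T (\<lambda>q. S q j)"
  unfolding mmul_def bilin_form_def sum_distrib_right mult.assoc
  by (rule sum.swap)

lemma bilin_form_cong:
  assumes "\<And>p. p \<in> J \<Longrightarrow> x p = x' p" "\<And>p q. p \<in> J \<Longrightarrow> q \<in> J \<Longrightarrow> T p q = T' p q"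
    "\<And>q. q \<in> J \<Longrightarrow> y q = y' q"
  shows "bilin_form J x T y = bilin_form J x' T' y'"
  unfolding bilin_form_def using assms by (intro sum.cong refl) auto

lemma bilin_form_insert:
  assumes "finite J" "k \<notin> J"
  shows "bilin_form (insert k J) x T y = x k * T k k * y k + (\<Sum>q\<in>J. x k * T k q * y q)
     + (\<Sum>p\<in>J. x p * T p k * y k) + bilin_form J x T y"
  using assms unfolding bilin_form_def by (simp add: sum.distrib algebra_simps)

lemma bilin_form_zero_left [simp]: "bilin_form J (\<lambda>_. 0) T y = 0"
  unfolding bilin_form_def by simp

lemma bilin_form_zero_right [simp]: "bilin_form J x T (\<lambda>_. 0) = 0"
  unfolding bilin_form_def by simp

lemma bilin_form_diff_left: "bilin_form J (\<lambda>p. x p - c * b p) T y = bilin_form J x T y - c * bilin_form J b T y"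
  unfolding bilin_form_def by (simp add: sum_subtractf sum_distrib_left left_diff_distrib mult.assoc)

lemma bilin_form_diff_right: "bilin_form J x T (\<lambda>q. y q - c * b q) = bilin_form J x T y - c * bilin_form J x T b"
  unfolding bilin_form_def
  by (simp add: sum_subtractf sum_distrib_left right_diff_distrib mult.assoc mult.left_commute)

lemma psd_on_insertD:
  assumes "finite J" "k \<notin> J" "psd_on (insert k J) S"
  shows "psd_on J S"
  unfolding psd_on_def
proof
  fix v
  have "0 \<le> bilin_form (insert k J) (v(k := 0)) S (v(k := 0))"
    using assms(3) unfolding psd_on_def by blast
  also have "\<dots> = bilin_form J v S v"
    using assms(2) by (simp add: bilin_form_insert[OF assms(1,2)]) (intro bilin_form_cong; auto)
  finally show "0 \<le> bilin_form J v S v" .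
qed

text \<open>Otherwise the form is negative at \<open>t e\<^sub>k + e\<^sub>q\<close> for a suitable \<open>t\<close>.\<close>
lemma psd_on_zero_diag_imp_zero_row:
  assumes fin: "finite J" and k: "k \<notin> J" and psd: "psd_on (insert k J) S"
    and sym: "symmetric_on (insert k J) S" and Skk: "S k k = 0" and q: "q \<in> J"
  shows "S k q = 0"
proof (rule ccontr)
  assume ne: "S k q \<noteq> 0"
  define t where "t = - (S q q + 1) / (2 * S k q)"
  define v where "v = (\<lambda>p. if p = k then t else if p = q then 1 else (0::real))"
  have Sqk: "S q k = S k q" using sym q unfolding symmetric_on_def by blast
  have vk: "v k = t" by (simp add: v_def)
  have vJ: "v p = (if p = q then 1 else 0)" if "p \<in> J" for p
    using that k by (auto simp: v_def)
  have "(\<Sum>p\<in>J. v k * S k p * v p) = (\<Sum>p\<in>J. if p = q then t * S k q else 0)"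
    by (rule sum.cong) (auto simp: vk vJ)
  then have row: "(\<Sum>p\<in>J. v k * S k p * v p) = t * S k q"
    using fin q by simp
  have "(\<Sum>p\<in>J. v p * S p k * v k) = (\<Sum>p\<in>J. if p = q then t * S k q else 0)"
    using Sqk by (intro sum.cong) (auto simp: vk vJ)
  then have col: "(\<Sum>p\<in>J. v p * S p k * v k) = t * S k q"
    using fin q by simp
  have "bilin_form J v S v = (\<Sum>p\<in>J. if p = q then (\<Sum>p'\<in>J. if p' = q then S p p' else 0) else 0)"
    unfolding bilin_form_def by (intro sum.cong) (auto simp: vJ intro!: sum.cong)
  then have rest: "bilin_form J v S v = S q q"
    using fin q by simp
  have "0 \<le> bilin_form (insert k J) v S v" using psd unfolding psd_on_def by blast
  also have "\<dots> = 2 * t * S k q + S q q"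
    using bilin_form_insert[OF fin k, of v S v] row col rest Skk by simp
  also have "\<dots> = -1" using ne unfolding t_def by (simp add: divide_simps)
  finally show False by simp
qed

text \<open>Block formula for a generalized inverse of the matrix with rows \<open>[a, b\<^sup>T]\<close> and
  \<open>[b, S]\<close>, given a generalized inverse \<open>T\<close> of the Schur complement \<open>S - b b\<^sup>T / a\<close>.\<close>
definition schur_ginverse ::
    "'j set \<Rightarrow> 'j \<Rightarrow> real \<Rightarrow> ('j \<Rightarrow> real) \<Rightarrow> ('j \<Rightarrow> 'j \<Rightarrow> real) \<Rightarrow> 'j \<Rightarrow> 'j \<Rightarrow> real" where
  "schur_ginverse J k a b T = (\<lambda>p q.
     if p = k \<and> q = k then 1 / a + bilin_form J b T b / a\<^sup>2
     else if p = k then - (\<Sum>r\<in>J. b r * T r q) / a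
     else if q = k then - (\<Sum>r\<in>J. T p r * b r) / a
     else T p q)"

lemma bilin_form_schur_ginverse:
  assumes fin: "finite J" and k: "k \<notin> J" and a: "a \<noteq> 0"
  shows "bilin_form (insert k J) x (schur_ginverse J k a b T) y = x k * y k / a
     + bilin_form J (\<lambda>p. x p - x k / a * b p) T (\<lambda>q. y q - y k / a * b q)"
proof -
  define T' where "T' = schur_ginverse J k a b T"
  have "(\<Sum>q\<in>J. x k * T' k q * y q) = (\<Sum>q\<in>J. x k * (- (\<Sum>r\<in>J. b r * T r q) / a) * y q)"
    using k by (intro sum.cong) (auto simp: T'_def schur_ginverse_def)
  also have "\<dots> = - x k / a * (\<Sum>q\<in>J. \<Sum>r\<in>J. b r * T r q * y q)"
    by (simp add: sum_distrib_left sum_distrib_right sum_negf algebra_simps sum_divide_distrib)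
  also have "(\<Sum>q\<in>J. \<Sum>r\<in>J. b r * T r q * y q) = bilin_form J b T y"
    unfolding bilin_form_def by (rule sum.swap)
  finally have row: "(\<Sum>q\<in>J. x k * T' k q * y q) = - x k / a * bilin_form J b T y" .
  have "(\<Sum>p\<in>J. x p * T' p k * y k) = (\<Sum>p\<in>J. x p * (- (\<Sum>r\<in>J. T p r * b r) / a) * y k)"
    using k by (intro sum.cong) (auto simp: T'_def schur_ginverse_def)
  also have "\<dots> = - y k / a * bilin_form J x T b"
    unfolding bilin_form_def
    by (simp add: sum_distrib_left sum_distrib_right sum_negf algebra_simps sum_divide_distrib)
  finally have col: "(\<Sum>p\<in>J. x p * T' p k * y k) = - y k / a * bilin_form J x T b" .
  have rest: "bilin_form J x T' y = bilin_form J x T y"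
    using k by (intro bilin_form_cong) (auto simp: T'_def schur_ginverse_def)
  have corner: "x k * T' k k * y k = x k * y k / a + x k * y k * bilin_form J b T b / a\<^sup>2"
    by (simp add: T'_def schur_ginverse_def algebra_simps)
  show ?thesis
    unfolding T'_def[symmetric] bilin_form_insert[OF fin k] row col rest corner
      bilin_form_diff_left bilin_form_diff_right
    by (simp add: algebra_simps power2_eq_square)
qed

lemma symmetric_on_schur_ginverse:
  assumes "symmetric_on J T"
  shows "symmetric_on (insert k J) (schur_ginverse J k a b T)"
proof -
  have "(\<Sum>r\<in>J. b r * T r q) = (\<Sum>r\<in>J. T q r * b r)" if "q \<in> J" for q
    using assms that unfolding symmetric_on_def by (intro sum.cong refl) (metis mult.commute)
  then show ?thesis
    using assms unfolding symmetric_on_def schur_ginverse_def by auto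
qed

lemma psd_on_schur_complement:
  assumes fin: "finite J" and k: "k \<notin> J" and psd: "psd_on (insert k J) S"
    and sym: "symmetric_on (insert k J) S" and a: "S k k \<noteq> 0"
  shows "psd_on J (\<lambda>p q. S p q - S p k * S q k / S k k)"
  unfolding psd_on_def
proof
  fix v
  define c where "c = (\<Sum>q\<in>J. S q k * v q)"
  define w where "w = v(k := - c / S k k)"
  have Skq: "S k q = S q k" if "q \<in> J" for q
    using sym that unfolding symmetric_on_def by blast
  have row: "(\<Sum>q\<in>J. w k * S k q * w q) = w k * c"
    unfolding c_def sum_distrib_left using k Skq by (intro sum.cong) (auto simp: w_def)
  have col: "(\<Sum>p\<in>J. w p * S p k * w k) = w k * c"
    unfolding c_def sum_distrib_left using k by (intro sum.cong) (auto simp: w_def)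
  have rest: "bilin_form J w S w = bilin_form J v S v"
    using k by (intro bilin_form_cong) (auto simp: w_def)
  have "0 \<le> bilin_form (insert k J) w S w" using psd unfolding psd_on_def by blast
  also have "\<dots> = bilin_form J v S v - c\<^sup>2 / S k k"
    unfolding bilin_form_insert[OF fin k] row col rest using a
    by (simp add: w_def field_simps power2_eq_square)
  also have "\<dots> = bilin_form J v (\<lambda>p q. S p q - S p k * S q k / S k k) v"
    unfolding bilin_form_def c_def power2_eq_square
    by (simp add: sum_subtractf sum_distrib_left sum_distrib_right sum_divide_distrib algebra_simps)
  finally show "0 \<le> bilin_form J v (\<lambda>p q. S p q - S p k * S q k / S k k) v" .
qed

lemma ginverse_on_insert_zero_row:
  assumes fin: "finite J" and k: "k \<notin> J"
    and row: "\<And>q. q \<in> insert k J \<Longrightarrow> S k q = 0" and col: "\<And>q. q \<in> insert k J \<Longrightarrow> S q k = 0"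
    and T: "ginverse_on J S T"
  shows "ginverse_on (insert k J) S (\<lambda>p q. if p = k \<or> q = k then 0 else T p q)"
proof -
  have form: "bilin_form (insert k J) x (\<lambda>p q. if p = k \<or> q = k then 0 else T p q) y
      = bilin_form J x T y" for x y
    using k by (simp add: bilin_form_insert[OF fin k]) (intro bilin_form_cong; auto)
  show ?thesis
    unfolding ginverse_on_def mmul_mmul_eq_bilin_form form
  proof (intro ballI)
    fix i j assume i: "i \<in> insert k J" and j: "j \<in> insert k J"
    consider "i = k" | "j = k" | "i \<in> J" "j \<in> J" using i j by auto
    then show "bilin_form J (S i) T (\<lambda>q. S q j) = S i j"
    proof cases
      case 1
      have "bilin_form J (S i) T (\<lambda>q. S q j) = bilin_form J (\<lambda>_. 0) T (\<lambda>q. S q j)"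
        using 1 row by (intro bilin_form_cong) auto
      then show ?thesis using 1 row j by simp
    next
      case 2
      have "bilin_form J (S i) T (\<lambda>q. S q j) = bilin_form J (S i) T (\<lambda>_. 0)"
        using 2 col by (intro bilin_form_cong) auto
      then show ?thesis using 2 col i by simp
    qed (use T in \<open>auto simp: ginverse_on_def mmul_mmul_eq_bilin_form\<close>)
  qed
qed

lemma ginverse_on_insert_schur:
  assumes fin: "finite J" and k: "k \<notin> J" and sym: "symmetric_on (insert k J) S"
    and a: "S k k \<noteq> 0" and T: "ginverse_on J (\<lambda>p q. S p q - S p k * S q k / S k k) T"
  shows "ginverse_on (insert k J) S (schur_ginverse J k (S k k) (\<lambda>p. S p k) T)"
  unfolding ginverse_on_def mmul_mmul_eq_bilin_form bilin_form_schur_ginverse[OF fin k a]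
proof (intro ballI)
  fix i j assume i: "i \<in> insert k J" and j: "j \<in> insert k J"
  have Skq: "S k q = S q k" if "q \<in> insert k J" for q
    using sym that unfolding symmetric_on_def by blast
  consider "i = k" | "j = k" | "i \<in> J" "j \<in> J" "i \<noteq> k" "j \<noteq> k" using i j k by auto
  then show "S i k * S k j / S k k + bilin_form J (\<lambda>p. S i p - S i k / S k k * S p k) T
      (\<lambda>q. S q j - S k j / S k k * S q k) = S i j"
  proof cases
    case 1
    have "S i p - S i k / S k k * S p k = 0" if "p \<in> J" for p
      using 1 a Skq[of p] that by simp
    then have "bilin_form J (\<lambda>p. S i p - S i k / S k k * S p k) T (\<lambda>q. S q j - S k j / S k k * S q k)
        = bilin_form J (\<lambda>_. 0) T (\<lambda>q. S q j - S k j / S k k * S q k)"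
      by (intro bilin_form_cong) simp_all
    then show ?thesis using 1 a by simp
  next
    case 2
    have "bilin_form J (\<lambda>p. S i p - S i k / S k k * S p k) T (\<lambda>q. S q j - S k j / S k k * S q k)
        = bilin_form J (\<lambda>p. S i p - S i k / S k k * S p k) T (\<lambda>_. 0)"
      using 2 a by (intro bilin_form_cong) simp_all
    then show ?thesis using 2 a by simp
  next
    case 3
    have "bilin_form J (\<lambda>p. S i p - S i k / S k k * S p k) T (\<lambda>q. S q j - S k j / S k k * S q k)
        = bilin_form J (\<lambda>p. S i p - S i k * S p k / S k k) T (\<lambda>q. S q j - S q k * S j k / S k k)"
      using 3 Skq[of j] by (intro bilin_form_cong) simp_all
    also have "\<dots> = S i j - S i k * S j k / S k k"
      using T 3 unfolding ginverse_on_def mmul_mmul_eq_bilin_form by auto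
    finally show ?thesis using 3 Skq[of j] by simp
  qed
qed

lemma psd_on_has_symmetric_ginverse:
  assumes "finite J" "symmetric_on J S" "psd_on J S"
  shows "\<exists>T. symmetric_on J T \<and> ginverse_on J S T"
  using assms
proof (induction J arbitrary: S rule: finite_induct)
  case empty
  then show ?case by (auto simp: symmetric_on_def ginverse_on_def mmul_mmul_eq_bilin_form)
next
  case (insert k J)
  note fin = insert.hyps(1) and k = insert.hyps(2) and sym = insert.prems(1) and psd = insert.prems(2)
  have symJ: "symmetric_on J S" using sym unfolding symmetric_on_def by blast
  show ?case
  proof (cases "S k k = 0")
    case True
    have row: "S k q = 0" if "q \<in> insert k J" for q
      using that True psd_on_zero_diag_imp_zero_row[OF fin k psd sym True] by auto
    have col: "S q k = 0" if "q \<in> insert k J" for q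
    proof -
      have "S q k = S k q" using sym that unfolding symmetric_on_def by blast
      then show ?thesis using row[OF that] by simp
    qed
    obtain T where T: "symmetric_on J T" "ginverse_on J S T"
      using insert.IH[OF symJ psd_on_insertD[OF fin k psd]] by blast
    have "symmetric_on (insert k J) (\<lambda>p q. if p = k \<or> q = k then 0 else T p q)"
      using T(1) unfolding symmetric_on_def by force
    then show ?thesis
      using ginverse_on_insert_zero_row[OF fin k row col T(2)] by blast
  next
    case False
    have sym': "symmetric_on J (\<lambda>p q. S p q - S p k * S q k / S k k)"
      using symJ unfolding symmetric_on_def by (metis mult.commute)
    obtain T where T: "symmetric_on J T" "ginverse_on J (\<lambda>p q. S p q - S p k * S q k / S k k) T"
      using insert.IH[OF sym' psd_on_schur_complement[OF fin k psd sym False]] by blast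
    show ?thesis
      using symmetric_on_schur_ginverse[OF T(1)] ginverse_on_insert_schur[OF fin k sym False T(2)]
      by blast
  qed
qed

text \<open>A row vector \<open>C\<close> annihilating the kernel of \<open>S\<close> satisfies \<open>C G S = C\<close> for every
  generalized inverse \<open>G\<close>: the defect \<open>r = C - C G S\<close> yields the kernel vector
  \<open>r - G S r\<close>, on which \<open>C\<close> evaluates to \<open>|r|\<^sup>2\<close>.\<close>
lemma ginverse_fixes_kernel_annihilator:
  assumes fin: "finite J" and G: "ginverse_on J S G"
    and C: "\<And>v. (\<forall>t\<in>J. (\<Sum>p\<in>J. S t p * v p) = 0) \<Longrightarrow> (\<Sum>p\<in>J. C p * v p) = 0"
    and l: "l \<in> J"
  shows "(\<Sum>p\<in>J. C p * mmul J G S p l) = C l"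
proof -
  define r where "r s = C s - (\<Sum>p\<in>J. C p * mmul J G S p s)" for s
  define v where "v p = r p - (\<Sum>s\<in>J. mmul J G S p s * r s)" for p
  have "(\<Sum>p\<in>J. S t p * v p) = 0" if t: "t \<in> J" for t
  proof -
    have "(\<Sum>p\<in>J. S t p * (\<Sum>s\<in>J. mmul J G S p s * r s)) = (\<Sum>p\<in>J. \<Sum>s\<in>J. S t p * mmul J G S p s * r s)"
      by (simp add: sum_distrib_left mult.assoc)
    also have "\<dots> = (\<Sum>s\<in>J. \<Sum>p\<in>J. S t p * mmul J G S p s * r s)"
      by (rule sum.swap)
    also have "\<dots> = (\<Sum>s\<in>J. mmul J (mmul J S G) S t s * r s)"
      by (simp add: mmul_assoc mmul_def[of J S "mmul J G S"] sum_distrib_right)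
    also have "\<dots> = (\<Sum>s\<in>J. S t s * r s)"
      using t G unfolding ginverse_on_def by (intro sum.cong) auto
    finally show ?thesis
      unfolding v_def by (simp add: right_diff_distrib sum_subtractf)
  qed
  then have "(\<Sum>p\<in>J. C p * v p) = 0" using C by blast
  moreover have "(\<Sum>p\<in>J. C p * v p) = (\<Sum>s\<in>J. (r s)\<^sup>2)"
  proof -
    have CGS: "(\<Sum>p\<in>J. C p * mmul J G S p s) = C s - r s" for s
      by (simp add: r_def)
    have "(\<Sum>p\<in>J. C p * v p) = (\<Sum>p\<in>J. C p * r p) - (\<Sum>p\<in>J. C p * (\<Sum>s\<in>J. mmul J G S p s * r s))"
      unfolding v_def by (simp add: right_diff_distrib sum_subtractf)
    also have "(\<Sum>p\<in>J. C p * (\<Sum>s\<in>J. mmul J G S p s * r s)) = (\<Sum>p\<in>J. \<Sum>s\<in>J. C p * mmul J G S p s * r s)"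
      by (simp add: sum_distrib_left mult.assoc)
    also have "\<dots> = (\<Sum>s\<in>J. (C s - r s) * r s)"
      by (subst sum.swap) (simp add: sum_distrib_right CGS[symmetric])
    finally show ?thesis
      by (simp add: left_diff_distrib sum_subtractf power2_eq_square)
  qed
  ultimately have "r l = 0"
    using fin l by (simp add: sum_nonneg_eq_0_iff)
  then show ?thesis unfolding r_def by simp
qed

section \<open>The Moore--Penrose inverse of a symmetric matrix\<close>

definition mtrans :: "('i \<Rightarrow> 'j \<Rightarrow> real) \<Rightarrow> 'j \<Rightarrow> 'i \<Rightarrow> real" where
  "mtrans A = (\<lambda>i j. A j i)"

text \<open>Matrices are total functions; restricted to \<open>J \<times> J\<close> they form an associative algebra
  under \<open>mmul J\<close>, in which the Penrose conditions become equations between functions.\<close>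
definition mrestrict :: "'j set \<Rightarrow> ('j \<Rightarrow> 'j \<Rightarrow> real) \<Rightarrow> 'j \<Rightarrow> 'j \<Rightarrow> real" where
  "mrestrict J A = (\<lambda>i j. if i \<in> J \<and> j \<in> J then A i j else 0)"

lemma mtrans_mmul: "mtrans (mmul J A B) = mmul J (mtrans B) (mtrans A)"
  unfolding mtrans_def mmul_def by (simp add: mult.commute)

lemma mtrans_mrestrict: "mtrans (mrestrict J A) = mrestrict J (mtrans A)"
  unfolding mtrans_def mrestrict_def by (intro ext) auto

lemma mrestrict_mmul: "mrestrict J (mmul J A B) = mmul J (mrestrict J A) (mrestrict J B)"
  unfolding mrestrict_def mmul_def by (intro ext) (auto intro: sum.cong)

lemma mrestrict_eq_iff: "mrestrict J A = mrestrict J B \<longleftrightarrow> (\<forall>i\<in>J. \<forall>j\<in>J. A i j = B i j)"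
proof
  assume eq: "mrestrict J A = mrestrict J B"
  show "\<forall>i\<in>J. \<forall>j\<in>J. A i j = B i j"
  proof (intro ballI)
    fix i j assume "i \<in> J" "j \<in> J"
    then show "A i j = B i j" using fun_cong[OF fun_cong[OF eq, of i], of j] by (simp add: mrestrict_def)
  qed
qed (simp add: mrestrict_def fun_eq_iff)

lemma mrestrict_eq_self_iff: "mrestrict J A = A \<longleftrightarrow> (\<forall>i j. i \<notin> J \<or> j \<notin> J \<longrightarrow> A i j = 0)"
  unfolding mrestrict_def fun_eq_iff by auto

lemma mrestrict_idem [simp]: "mrestrict J (mrestrict J A) = mrestrict J A"
  unfolding mrestrict_def by (intro ext) auto

lemma mtrans_mrestrict_eq_iff: "mtrans (mrestrict J S) = mrestrict J S \<longleftrightarrow> symmetric_on J S"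
  by (simp only: mtrans_mrestrict mrestrict_eq_iff) (auto simp: mtrans_def symmetric_on_def)

lemma mtrans_eq_selfD: "mtrans A = A \<Longrightarrow> A j i = A i j"
  unfolding mtrans_def by (metis)

locale finite_index_set =
  fixes J :: "'j set"
  assumes finite_J: "finite J"
begin

abbreviation mprod :: "('j \<Rightarrow> 'j \<Rightarrow> real) \<Rightarrow> ('j \<Rightarrow> 'j \<Rightarrow> real) \<Rightarrow> 'j \<Rightarrow> 'j \<Rightarrow> real"
    (infixl "\<odot>" 70)
  where "A \<odot> B \<equiv> mmul J A B"

lemma mprod_assoc: "A \<odot> B \<odot> C = A \<odot> (B \<odot> C)"
  by (rule mmul_assoc)

lemma mprod_diff_right: "A \<odot> (\<lambda>i j. B i j - C i j) = (\<lambda>i j. (A \<odot> B) i j - (A \<odot> C) i j)"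
  unfolding mmul_def by (simp add: right_diff_distrib sum_subtractf)

lemma mprod_one_right:
  assumes "mrestrict J A = A"
  shows "A \<odot> (\<lambda>i j. if i = j then 1 else 0) = A"
proof (intro ext)
  fix i j
  have "(A \<odot> (\<lambda>i j. if i = j then 1 else 0)) i j = (if j \<in> J then A i j else 0)"
    unfolding mmul_def using finite_J by (simp add: if_distrib[of "\<lambda>x. _ * x"] cong: if_cong)
  then show "(A \<odot> (\<lambda>i j. if i = j then 1 else 0)) i j = A i j"
    using assms unfolding mrestrict_eq_self_iff by auto
qed

lemma mrestrict_mprod_sandwich:
  assumes "mrestrict J A = A" "mrestrict J C = C"
  shows "mrestrict J (A \<odot> B \<odot> C) = A \<odot> B \<odot> C"
  using assms unfolding mrestrict_eq_self_iff mmul_def by auto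

lemma is_MP_inverse_iff:
  assumes R: "R = mrestrict J S"
  shows "is_MP_inverse J J S G \<longleftrightarrow> mrestrict J G = G \<and> R \<odot> G \<odot> R = R \<and> G \<odot> R \<odot> G = G
    \<and> mtrans (R \<odot> G) = R \<odot> G \<and> mtrans (G \<odot> R) = G \<odot> R"
proof (cases "mrestrict J G = G")
  case True
  have e1: "R \<odot> G \<odot> R = mrestrict J (S \<odot> G \<odot> S)" and e2: "G \<odot> R \<odot> G = mrestrict J (G \<odot> S \<odot> G)"
    and e3: "R \<odot> G = mrestrict J (S \<odot> G)" and e4: "G \<odot> R = mrestrict J (G \<odot> S)"
    using True unfolding R mrestrict_mmul by simp_all
  have "R \<odot> G \<odot> R = R \<longleftrightarrow> (\<forall>i\<in>J. \<forall>j\<in>J. (S \<odot> G \<odot> S) i j = S i j)"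
    by (simp only: e1) (simp only: R mrestrict_eq_iff)
  moreover have "G \<odot> R \<odot> G = G \<longleftrightarrow> (\<forall>i\<in>J. \<forall>j\<in>J. (G \<odot> S \<odot> G) i j = G i j)"
    using e2 True mrestrict_eq_iff[of J "G \<odot> S \<odot> G" G] by simp
  moreover have "mtrans (R \<odot> G) = R \<odot> G \<longleftrightarrow> (\<forall>i\<in>J. \<forall>j\<in>J. (S \<odot> G) i j = (S \<odot> G) j i)"
    by (simp only: e3 mtrans_mrestrict_eq_iff symmetric_on_def)
  moreover have "mtrans (G \<odot> R) = G \<odot> R \<longleftrightarrow> (\<forall>i\<in>J. \<forall>j\<in>J. (G \<odot> S) i j = (G \<odot> S) j i)"
    by (simp only: e4 mtrans_mrestrict_eq_iff symmetric_on_def)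
  ultimately show ?thesis
    using True unfolding is_MP_inverse_def mrestrict_eq_self_iff by blast
next
  case False
  then show ?thesis unfolding is_MP_inverse_def mrestrict_eq_self_iff by blast
qed

lemma mprod_self_cancel:
  assumes R: "mtrans R = R" "mrestrict J R = R" and RRU: "R \<odot> (R \<odot> U) = (\<lambda>_ _. 0)"
  shows "R \<odot> U = (\<lambda>_ _. 0)"
proof (intro ext)
  fix i j
  have "(\<Sum>i\<in>J. ((R \<odot> U) i j)\<^sup>2) = (\<Sum>i\<in>J. \<Sum>p\<in>J. R i p * U p j * (R \<odot> U) i j)"
    unfolding power2_eq_square by (simp add: mmul_def[of J R U] sum_distrib_right)
  also have "\<dots> = (\<Sum>p\<in>J. \<Sum>i\<in>J. R i p * U p j * (R \<odot> U) i j)"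
    by (rule sum.swap)
  also have "\<dots> = (\<Sum>p\<in>J. U p j * (R \<odot> (R \<odot> U)) p j)"
    unfolding mmul_def[of J R "R \<odot> U"]
    by (simp add: sum_distrib_left mtrans_eq_selfD[OF R(1), of _ p for p] mult_ac)
  finally have "(\<Sum>i\<in>J. ((R \<odot> U) i j)\<^sup>2) = 0" by (simp add: RRU)
  then show "(R \<odot> U) i j = 0"
    using finite_J R(2) unfolding mrestrict_eq_self_iff mmul_def
    by (cases "i \<in> J") (simp_all add: sum_nonneg_eq_0_iff)
qed

lemma psd_on_mprod_self:
  assumes "mtrans R = R"
  shows "psd_on J (R \<odot> R)"
  unfolding psd_on_def
proof
  fix v
  have "bilin_form J v (R \<odot> R) v = (\<Sum>p\<in>J. \<Sum>q\<in>J. \<Sum>r\<in>J. v p * R p r * (R r q * v q))"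
    unfolding bilin_form_def mmul_def by (simp add: sum_distrib_left sum_distrib_right mult.assoc)
  also have "\<dots> = (\<Sum>p\<in>J. \<Sum>r\<in>J. \<Sum>q\<in>J. v p * R p r * (R r q * v q))"
    by (intro sum.cong refl sum.swap)
  also have "\<dots> = (\<Sum>r\<in>J. \<Sum>p\<in>J. \<Sum>q\<in>J. v p * R p r * (R r q * v q))"
    by (rule sum.swap)
  also have "\<dots> = (\<Sum>r\<in>J. (\<Sum>p\<in>J. v p * R p r)\<^sup>2)"
    unfolding power2_eq_square sum_product
    by (simp add: mtrans_eq_selfD[OF assms, of _ r for r] mult.commute)
  also have "\<dots> \<ge> 0" by (intro sum_nonneg) simp
  finally show "0 \<le> bilin_form J v (R \<odot> R) v" .
qed

lemma ginverse_square_absorb: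
  assumes R: "mtrans R = R" "mrestrict J R = R" and PTP: "R \<odot> R \<odot> T \<odot> (R \<odot> R) = R \<odot> R"
  shows "R \<odot> T \<odot> R \<odot> R = R"
proof -
  define Id :: "'j \<Rightarrow> 'j \<Rightarrow> real" where "Id = (\<lambda>i j. if i = j then 1 else 0)"
  have P: "mrestrict J (R \<odot> R) = R \<odot> R"
    using R(2) by (metis mrestrict_mmul)
  have "R \<odot> (R \<odot> (\<lambda>i j. (T \<odot> (R \<odot> R)) i j - Id i j))
      = (\<lambda>i j. (R \<odot> R \<odot> T \<odot> (R \<odot> R)) i j - (R \<odot> R \<odot> Id) i j)"
    by (simp only: mprod_assoc mprod_diff_right)
  also have "\<dots> = (\<lambda>_ _. 0)"
    unfolding PTP Id_def mprod_one_right[OF P] by simp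
  finally have "R \<odot> (\<lambda>i j. (T \<odot> (R \<odot> R)) i j - Id i j) = (\<lambda>_ _. 0)"
    by (rule mprod_self_cancel[OF R])
  then have "(\<lambda>i j. (R \<odot> (T \<odot> (R \<odot> R))) i j - R i j) = (\<lambda>_ _. 0)"
    unfolding mprod_diff_right Id_def mprod_one_right[OF R(2)] .
  then show ?thesis
    unfolding fun_eq_iff mprod_assoc by simp
qed

text \<open>The classical formula \<open>A\<^sup>+ = A\<^sup>T (A A\<^sup>T)\<^sup>- A (A\<^sup>T A)\<^sup>- A\<^sup>T\<close>, specialised to a symmetric \<open>A = R\<close>.\<close>
lemma MP_conditions_of_ginverse_square:
  assumes R: "mtrans R = R" "mrestrict J R = R" and T: "mtrans T = T"
    and PTP: "R \<odot> R \<odot> T \<odot> (R \<odot> R) = R \<odot> R"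
  defines "G \<equiv> R \<odot> T \<odot> R \<odot> T \<odot> R"
  shows "mrestrict J G = G \<and> R \<odot> G \<odot> R = R \<and> G \<odot> R \<odot> G = G
    \<and> mtrans (R \<odot> G) = R \<odot> G \<and> mtrans (G \<odot> R) = G \<odot> R"
proof -
  have RTP: "R \<odot> T \<odot> R \<odot> R = R"
    by (rule ginverse_square_absorb[OF R PTP])
  have PTR: "R \<odot> R \<odot> T \<odot> R = R"
    using arg_cong[OF RTP, of mtrans] unfolding mtrans_mmul R T by (simp only: mprod_assoc)
  have RG: "R \<odot> G = R \<odot> T \<odot> R"
    unfolding G_def by (simp only: mprod_assoc[symmetric] PTR)
  have GR: "G \<odot> R = R \<odot> T \<odot> R"
    using RTP unfolding G_def by (simp only: mprod_assoc)
  have "G = R \<odot> (T \<odot> R \<odot> T) \<odot> R"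
    unfolding G_def by (simp only: mprod_assoc)
  then have "mrestrict J G = G"
    using mrestrict_mprod_sandwich[OF R(2) R(2)] by simp
  moreover have "R \<odot> G \<odot> R = R"
    unfolding RG using RTP by (simp only: mprod_assoc)
  moreover have "G \<odot> R \<odot> G = G"
  proof -
    have "G \<odot> R \<odot> G = R \<odot> T \<odot> R \<odot> G"
      by (simp only: GR)
    also have "\<dots> = G"
      unfolding G_def using RTP by (simp only: mprod_assoc[symmetric])
    finally show ?thesis .
  qed
  moreover have "mtrans (R \<odot> T \<odot> R) = R \<odot> T \<odot> R"
    unfolding mtrans_mmul R T mprod_assoc ..
  ultimately show ?thesis unfolding RG GR by blast
qed

lemma ginverse_on_mrestrict:
  assumes P: "mrestrict J P = P" and T: "ginverse_on J P T"
  shows "P \<odot> mrestrict J T \<odot> P = P"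
proof -
  have "P \<odot> mrestrict J T \<odot> P = mrestrict J (P \<odot> mrestrict J T \<odot> P)"
    by (rule mrestrict_mprod_sandwich[OF P P, symmetric])
  also have "\<dots> = mrestrict J P"
    unfolding mrestrict_eq_iff mmul_mmul_eq_bilin_form
  proof (intro ballI)
    fix i j assume ij: "i \<in> J" "j \<in> J"
    have "bilin_form J (P i) (mrestrict J T) (\<lambda>q. P q j) = bilin_form J (P i) T (\<lambda>q. P q j)"
      by (intro bilin_form_cong) (simp_all add: mrestrict_def)
    also have "\<dots> = P i j"
      using T ij unfolding ginverse_on_def mmul_mmul_eq_bilin_form by blast
    finally show "bilin_form J (P i) (mrestrict J T) (\<lambda>q. P q j) = P i j" .
  qed
  also have "\<dots> = P"
    by (rule P)
  finally show ?thesis .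
qed

lemma MP_inverse_exists:
  assumes "symmetric_on J S"
  shows "\<exists>G. is_MP_inverse J J S G"
proof -
  define R where "R = mrestrict J S"
  have R: "mtrans R = R" "mrestrict J R = R"
    using assms unfolding R_def mtrans_mrestrict_eq_iff by simp_all
  have P: "mrestrict J (R \<odot> R) = R \<odot> R"
    unfolding mrestrict_mmul R(2) ..
  have RR: "(R \<odot> R) j i = (R \<odot> R) i j" for i j
    by (rule mtrans_eq_selfD) (simp only: mtrans_mmul R(1))
  have "symmetric_on J (R \<odot> R)"
    unfolding symmetric_on_def by (intro ballI) (rule RR)
  from psd_on_has_symmetric_ginverse[OF finite_J this psd_on_mprod_self[OF R(1)]]
  obtain T0 where T0: "symmetric_on J T0" "ginverse_on J (R \<odot> R) T0"
    by blast
  define T where "T = mrestrict J T0"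
  have T: "mtrans T = T"
    using T0(1) unfolding T_def mtrans_mrestrict_eq_iff .
  have PTP: "R \<odot> R \<odot> T \<odot> (R \<odot> R) = R \<odot> R"
    unfolding T_def by (rule ginverse_on_mrestrict[OF P T0(2)])
  have "is_MP_inverse J J S (R \<odot> T \<odot> R \<odot> T \<odot> R)"
    using MP_conditions_of_ginverse_square[OF R T PTP] by (simp only: is_MP_inverse_iff[OF R_def])
  then show ?thesis by blast
qed

lemma MP_inverse_unique:
  assumes S: "symmetric_on J S" and G1: "is_MP_inverse J J S G1" and G2: "is_MP_inverse J J S G2"
  shows "G1 = G2"
proof -
  define R where "R = mrestrict J S"
  have R: "mtrans R = R"
    using S unfolding R_def mtrans_mrestrict_eq_iff .
  have Penrose: "G \<odot> R \<odot> G = G" "mtrans G \<odot> R = R \<odot> G" "R \<odot> mtrans G = G \<odot> R"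
    and R_alt: "R = R \<odot> mtrans G \<odot> R"
    if "is_MP_inverse J J S G" for G
  proof -
    have C: "R \<odot> G \<odot> R = R" "G \<odot> R \<odot> G = G" "mtrans (R \<odot> G) = R \<odot> G" "mtrans (G \<odot> R) = G \<odot> R"
      using that unfolding is_MP_inverse_iff[OF R_def] by blast+
    show "G \<odot> R \<odot> G = G" by (rule C(2))
    show "mtrans G \<odot> R = R \<odot> G" using C(3) by (simp add: mtrans_mmul R)
    show "R \<odot> mtrans G = G \<odot> R" using C(4) by (simp add: mtrans_mmul R)
    show "R = R \<odot> mtrans G \<odot> R"
      using arg_cong[OF C(1), of mtrans] unfolding mtrans_mmul R by (simp only: mprod_assoc)
  qed
  have "G1 = G1 \<odot> (mtrans G1 \<odot> R)"
    by (simp only: Penrose(2)[OF G1] mprod_assoc[symmetric] Penrose(1)[OF G1])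
  also have "\<dots> = G1 \<odot> (mtrans G1 \<odot> (R \<odot> mtrans G2 \<odot> R))"
    by (simp only: R_alt[OF G2, symmetric])
  also have "\<dots> = G1 \<odot> (mtrans G1 \<odot> R) \<odot> (mtrans G2 \<odot> R)"
    by (simp only: mprod_assoc)
  also have "\<dots> = G1 \<odot> R \<odot> G1 \<odot> R \<odot> G2"
    by (simp only: Penrose(2)[OF G1] Penrose(2)[OF G2] mprod_assoc[symmetric])
  also have "\<dots> = G1 \<odot> R \<odot> G2"
    by (simp only: Penrose(1)[OF G1])
  finally have G1_eq: "G1 = G1 \<odot> R \<odot> G2" .
  have "G2 = R \<odot> mtrans G2 \<odot> G2"
    by (simp only: Penrose(3)[OF G2] Penrose(1)[OF G2])
  also have "\<dots> = (R \<odot> mtrans G1 \<odot> R) \<odot> mtrans G2 \<odot> G2"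
    by (simp only: R_alt[OF G1, symmetric])
  also have "\<dots> = R \<odot> mtrans G1 \<odot> (R \<odot> mtrans G2) \<odot> G2"
    by (simp only: mprod_assoc)
  also have "\<dots> = G1 \<odot> R \<odot> (G2 \<odot> R) \<odot> G2"
    by (simp only: Penrose(3)[OF G1] Penrose(3)[OF G2])
  also have "\<dots> = G1 \<odot> R \<odot> G2"
    by (simp only: mprod_assoc[of "G1 \<odot> R"] Penrose(1)[OF G2])
  finally show ?thesis using G1_eq by simp
qed

lemma is_MP_inverse_MP_inv:
  assumes "symmetric_on J S"
  shows "is_MP_inverse J J S (MP_inv J J S)"
proof -
  have "\<exists>!G. is_MP_inverse J J S G"
    using MP_inverse_exists[OF assms] MP_inverse_unique[OF assms] by blast
  then show ?thesis unfolding MP_inv_def by (rule theI')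
qed

end

section \<open>Second-order calculus\<close>

lemma bl_cov_commute: "bl_cov M f g = bl_cov M g f"
  unfolding bl_cov_def by (simp add: mult.commute)

lemma bl_cov_cong:
  assumes "\<And>\<omega>. \<omega> \<in> space M \<Longrightarrow> f \<omega> = f' \<omega>" "\<And>\<omega>. \<omega> \<in> space M \<Longrightarrow> g \<omega> = g' \<omega>"
  shows "bl_cov M f g = bl_cov M f' g'"
  unfolding bl_cov_def prev_def using assms by (simp cong: Bochner_Integration.integral_cong)

context prob_space
begin

lemma sq_int_integrable: "sq_int M f \<Longrightarrow> integrable M f"
  unfolding sq_int_def by (auto intro: square_integrable_imp_integrable)

lemma integrable_mult_sq_int:
  assumes f: "sq_int M f" and g: "sq_int M g"
  shows "integrable M (\<lambda>\<omega>. f \<omega> * g \<omega>)"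
proof (rule Bochner_Integration.integrable_bound)
  show "integrable M (\<lambda>\<omega>. (f \<omega>)\<^sup>2 + (g \<omega>)\<^sup>2)" using f g unfolding sq_int_def by auto
  show "(\<lambda>\<omega>. f \<omega> * g \<omega>) \<in> borel_measurable M" using f g unfolding sq_int_def by auto
  have "\<bar>x * y\<bar> \<le> x\<^sup>2 + y\<^sup>2" for x y :: real
  proof -
    have "\<bar>x * y\<bar> \<le> 2 * \<bar>x\<bar> * \<bar>y\<bar>" by (simp add: abs_mult)
    also have "\<dots> \<le> \<bar>x\<bar>\<^sup>2 + \<bar>y\<bar>\<^sup>2" by (rule sum_squares_bound)
    finally show ?thesis by simp
  qed
  then show "AE \<omega> in M. norm (f \<omega> * g \<omega>) \<le> norm ((f \<omega>)\<^sup>2 + (g \<omega>)\<^sup>2)" by simp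
qed

lemma sq_int_const: "sq_int M (\<lambda>_. c)"
  unfolding sq_int_def by simp

lemma sq_int_add:
  assumes f: "sq_int M f" and g: "sq_int M g"
  shows "sq_int M (\<lambda>\<omega>. f \<omega> + g \<omega>)"
proof -
  have "integrable M (\<lambda>\<omega>. (f \<omega>)\<^sup>2 + (g \<omega>)\<^sup>2 + 2 * (f \<omega> * g \<omega>))"
    using f g integrable_mult_sq_int[OF f g] unfolding sq_int_def by auto
  then show ?thesis
    using f g unfolding sq_int_def by (auto simp: power2_sum mult.assoc intro: borel_measurable_add)
qed

lemma sq_int_scale: "sq_int M f \<Longrightarrow> sq_int M (\<lambda>\<omega>. c * f \<omega>)"
  unfolding sq_int_def by (simp add: power_mult_distrib borel_measurable_times)

lemma sq_int_diff: "sq_int M f \<Longrightarrow> sq_int M g \<Longrightarrow> sq_int M (\<lambda>\<omega>. f \<omega> - g \<omega>)"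
  using sq_int_add[of f "\<lambda>\<omega>. (-1) * g \<omega>"] sq_int_scale[of g "-1"] by simp

lemma sq_int_sum:
  "finite L \<Longrightarrow> (\<And>l. l \<in> L \<Longrightarrow> sq_int M (g l)) \<Longrightarrow> sq_int M (\<lambda>\<omega>. \<Sum>l\<in>L. g l \<omega>)"
  by (induction L rule: finite_induct) (auto intro: sq_int_const sq_int_add)

lemma sq_int_affine:
  "finite L \<Longrightarrow> (\<And>l. l \<in> L \<Longrightarrow> sq_int M (g l)) \<Longrightarrow> sq_int M (\<lambda>\<omega>. c + (\<Sum>l\<in>L. \<gamma> l * g l \<omega>))"
  by (intro sq_int_add sq_int_const sq_int_sum sq_int_scale)

lemma prev_affine:
  assumes "finite L" "\<And>l. l \<in> L \<Longrightarrow> integrable M (g l)"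
  shows "prev M (\<lambda>\<omega>. c + (\<Sum>l\<in>L. \<gamma> l * g l \<omega>)) = c + (\<Sum>l\<in>L. \<gamma> l * prev M (g l))"
  using assms unfolding prev_def by (simp add: prob_space)

lemma bl_cov_affine_right:
  assumes f: "sq_int M f" and L: "finite L" and g: "\<And>l. l \<in> L \<Longrightarrow> sq_int M (g l)"
  shows "bl_cov M f (\<lambda>\<omega>. c + (\<Sum>l\<in>L. \<gamma> l * g l \<omega>)) = (\<Sum>l\<in>L. \<gamma> l * bl_cov M f (g l))"
proof -
  have fg: "integrable M (\<lambda>\<omega>. f \<omega> * g l \<omega>)" if "l \<in> L" for l
    using integrable_mult_sq_int[OF f g[OF that]] .
  have "prev M (\<lambda>\<omega>. f \<omega> * (c + (\<Sum>l\<in>L. \<gamma> l * g l \<omega>)))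
      = prev M (\<lambda>\<omega>. c * f \<omega> + (\<Sum>l\<in>L. \<gamma> l * (f \<omega> * g l \<omega>)))"
    by (simp add: algebra_simps sum_distrib_left)
  also have "\<dots> = c * prev M f + (\<Sum>l\<in>L. \<gamma> l * prev M (\<lambda>\<omega>. f \<omega> * g l \<omega>))"
    using sq_int_integrable[OF f] fg L unfolding prev_def by simp
  finally have "prev M (\<lambda>\<omega>. f \<omega> * (c + (\<Sum>l\<in>L. \<gamma> l * g l \<omega>)))
      = c * prev M f + (\<Sum>l\<in>L. \<gamma> l * prev M (\<lambda>\<omega>. f \<omega> * g l \<omega>))" .
  moreover have "prev M (\<lambda>\<omega>. c + (\<Sum>l\<in>L. \<gamma> l * g l \<omega>)) = c + (\<Sum>l\<in>L. \<gamma> l * prev M (g l))"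
    by (rule prev_affine[OF L sq_int_integrable[OF g]])
  ultimately show ?thesis
    unfolding bl_cov_def by (simp add: algebra_simps sum_subtractf sum_distrib_left)
qed

lemma bl_cov_affine_left:
  "sq_int M f \<Longrightarrow> finite L \<Longrightarrow> (\<And>l. l \<in> L \<Longrightarrow> sq_int M (g l)) \<Longrightarrow>
    bl_cov M (\<lambda>\<omega>. c + (\<Sum>l\<in>L. \<gamma> l * g l \<omega>)) f = (\<Sum>l\<in>L. \<gamma> l * bl_cov M (g l) f)"
  using bl_cov_affine_right[of f L g c \<gamma>] by (simp add: bl_cov_commute)

lemma bl_cov_add_left:
  assumes "sq_int M f" "sq_int M g" "sq_int M h"
  shows "bl_cov M (\<lambda>\<omega>. f \<omega> + g \<omega>) h = bl_cov M f h + bl_cov M g h"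
  using assms sq_int_integrable integrable_mult_sq_int unfolding bl_cov_def prev_def
  by (simp add: distrib_right)

lemma bl_cov_diff_left:
  assumes "sq_int M f" "sq_int M g" "sq_int M h"
  shows "bl_cov M (\<lambda>\<omega>. f \<omega> - g \<omega>) h = bl_cov M f h - bl_cov M g h"
  using assms sq_int_integrable integrable_mult_sq_int unfolding bl_cov_def prev_def
  by (simp add: left_diff_distrib)

text \<open>A variable of zero variance is almost surely constant.\<close>
lemma bl_cov_eq_0_if_variance_0:
  assumes h: "sq_int M h" and y: "sq_int M y" and var: "bl_cov M h h = 0"
  shows "bl_cov M y h = 0"
proof -
  define c where "c = prev M h"
  have "prev M (\<lambda>\<omega>. (h \<omega> - c)\<^sup>2) = prev M (\<lambda>\<omega>. (h \<omega>)\<^sup>2 - 2 * c * h \<omega> + c\<^sup>2)"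
    by (rule arg_cong[where f = "prev M"]) (simp add: fun_eq_iff power2_eq_square algebra_simps)
  also have "\<dots> = prev M (\<lambda>\<omega>. (h \<omega>)\<^sup>2) - 2 * c * prev M h + c\<^sup>2"
    using h sq_int_integrable[OF h] unfolding prev_def sq_int_def by (simp add: prob_space)
  also have "\<dots> = bl_cov M h h"
    unfolding bl_cov_def c_def by (simp add: power2_eq_square)
  finally have "AE \<omega> in M. (h \<omega> - c)\<^sup>2 = 0"
    using var sq_int_diff[OF h sq_int_const] integral_nonneg_eq_0_iff_AE[of M "\<lambda>\<omega>. (h \<omega> - c)\<^sup>2"]
    unfolding prev_def sq_int_def by simp
  then have "AE \<omega> in M. y \<omega> * (h \<omega> - c) = 0" by auto
  then have "prev M (\<lambda>\<omega>. y \<omega> * (h \<omega> - c)) = 0"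
    unfolding prev_def by (rule integral_eq_zero_AE)
  moreover have "prev M (\<lambda>\<omega>. y \<omega> * (h \<omega> - c)) = bl_cov M y h"
    using integrable_mult_sq_int[OF y h] sq_int_integrable[OF y]
    unfolding bl_cov_def prev_def c_def by (simp add: right_diff_distrib mult.commute)
  ultimately show ?thesis by simp
qed

lemma prev_square_add_uncorrelated:
  assumes e: "sq_int M e" and d: "sq_int M d" and ed: "prev M (\<lambda>\<omega>. e \<omega> * d \<omega>) = 0"
  shows "prev M (\<lambda>\<omega>. (e \<omega> + d \<omega>)\<^sup>2) = prev M (\<lambda>\<omega>. (e \<omega>)\<^sup>2) + prev M (\<lambda>\<omega>. (d \<omega>)\<^sup>2)"
  using e d ed integrable_mult_sq_int[OF e d] unfolding sq_int_def prev_def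
  by (simp add: power2_sum mult.assoc)

lemma prev_square_sum_uncorrelated:
  assumes N: "finite N" and R: "\<And>j. j \<in> N \<Longrightarrow> sq_int M (R j)"
    and mean: "\<And>j. j \<in> N \<Longrightarrow> prev M (R j) = 0"
    and uncorr: "\<And>j l. j \<in> N \<Longrightarrow> l \<in> N \<Longrightarrow> j \<noteq> l \<Longrightarrow> bl_cov M (R j) (R l) = 0"
    and var: "\<And>j. j \<in> N \<Longrightarrow> bl_cov M (R j) (R j) = V"
  shows "prev M (\<lambda>\<omega>. (\<Sum>j\<in>N. R j \<omega>)\<^sup>2) = real (card N) * V"
proof -
  have "prev M (\<lambda>\<omega>. (\<Sum>j\<in>N. R j \<omega>)\<^sup>2) = prev M (\<lambda>\<omega>. \<Sum>j\<in>N. \<Sum>l\<in>N. R j \<omega> * R l \<omega>)"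
    by (simp add: power2_eq_square sum_product)
  also have "\<dots> = (\<Sum>j\<in>N. \<Sum>l\<in>N. bl_cov M (R j) (R l))"
    using N integrable_mult_sq_int[OF R R] mean unfolding prev_def bl_cov_def by simp
  also have "\<dots> = (\<Sum>j\<in>N. \<Sum>l\<in>N. if l = j then V else 0)"
    using uncorr var by (intro sum.cong refl) auto
  also have "\<dots> = (\<Sum>j\<in>N. V)"
    using N by simp
  finally show ?thesis by simp
qed

lemma prev_sum_square_lincomb_le:
  assumes X: "finite X" and K: "finite K" and d: "\<And>k. k \<in> K \<Longrightarrow> sq_int M (d k)"
  shows "prev M (\<lambda>\<omega>. \<Sum>x\<in>X. (\<Sum>k\<in>K. A x k * d k \<omega>)\<^sup>2)
    \<le> (\<Sum>x\<in>X. \<Sum>k\<in>K. (A x k)\<^sup>2) * (\<Sum>k\<in>K. prev M (\<lambda>\<omega>. (d k \<omega>)\<^sup>2))"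
proof -
  have "prev M (\<lambda>\<omega>. \<Sum>x\<in>X. (\<Sum>k\<in>K. A x k * d k \<omega>)\<^sup>2)
      \<le> prev M (\<lambda>\<omega>. (\<Sum>x\<in>X. \<Sum>k\<in>K. (A x k)\<^sup>2) * (\<Sum>k\<in>K. (d k \<omega>)\<^sup>2))"
    unfolding prev_def
  proof (rule integral_mono)
    show "integrable M (\<lambda>\<omega>. \<Sum>x\<in>X. (\<Sum>k\<in>K. A x k * d k \<omega>)\<^sup>2)"
      using sq_int_sum[OF K sq_int_scale[OF d]] unfolding sq_int_def by auto
    show "integrable M (\<lambda>\<omega>. (\<Sum>x\<in>X. \<Sum>k\<in>K. (A x k)\<^sup>2) * (\<Sum>k\<in>K. (d k \<omega>)\<^sup>2))"
      using d unfolding sq_int_def by auto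
    show "(\<Sum>x\<in>X. (\<Sum>k\<in>K. A x k * d k \<omega>)\<^sup>2) \<le> (\<Sum>x\<in>X. \<Sum>k\<in>K. (A x k)\<^sup>2) * (\<Sum>k\<in>K. (d k \<omega>)\<^sup>2)"
      for \<omega>
      unfolding sum_distrib_right[of "\<lambda>x. \<Sum>k\<in>K. (A x k)\<^sup>2"] by (intro sum_mono Cauchy_Schwarz_ineq_sum)
  qed
  also have "\<dots> = (\<Sum>x\<in>X. \<Sum>k\<in>K. (A x k)\<^sup>2) * (\<Sum>k\<in>K. prev M (\<lambda>\<omega>. (d k \<omega>)\<^sup>2))"
    using K d unfolding prev_def sq_int_def by simp
  finally show ?thesis .
qed

end

section \<open>Adjusted expectation\<close>

abbreviation cov_matrix :: "'a measure \<Rightarrow> ('j \<Rightarrow> 'a \<Rightarrow> real) \<Rightarrow> 'j \<Rightarrow> 'j \<Rightarrow> real" where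
  "cov_matrix M W \<equiv> (\<lambda>j k. bl_cov M (W j) (W k))"

definition adj_coeff :: "'a measure \<Rightarrow> 'j set \<Rightarrow> ('j \<Rightarrow> 'a \<Rightarrow> real) \<Rightarrow> ('a \<Rightarrow> real) \<Rightarrow> 'j \<Rightarrow> real" where
  "adj_coeff M J W y k = (\<Sum>j\<in>J. bl_cov M y (W j) * MP_inv J J (cov_matrix M W) j k)"

lemma adj_exp_eq:
  "adj_exp M J W Y i \<omega> = prev M (Y i) + (\<Sum>k\<in>J. adj_coeff M J W (Y i) k * (W k \<omega> - prev M (W k)))"
  unfolding adj_exp_def adj_coeff_def Let_def sum_distrib_right by (subst sum.swap) (rule refl)

lemma adj_exp_eq_affine:
  "adj_exp M J W Y i = (\<lambda>\<omega>. (prev M (Y i) - (\<Sum>k\<in>J. adj_coeff M J W (Y i) k * prev M (W k)))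
      + (\<Sum>k\<in>J. adj_coeff M J W (Y i) k * W k \<omega>))"
  unfolding adj_exp_eq by (simp add: fun_eq_iff right_diff_distrib sum_subtractf)

context prob_space
begin

lemma sq_int_adj_exp:
  "finite J \<Longrightarrow> (\<And>j. j \<in> J \<Longrightarrow> sq_int M (W j)) \<Longrightarrow> sq_int M (adj_exp M J W Y i)"
  unfolding adj_exp_eq_affine by (rule sq_int_affine)

lemma prev_adj_exp:
  "finite J \<Longrightarrow> (\<And>j. j \<in> J \<Longrightarrow> sq_int M (W j)) \<Longrightarrow> prev M (adj_exp M J W Y i) = prev M (Y i)"
  unfolding adj_exp_eq_affine by (simp add: prev_affine sq_int_integrable)

lemma bl_cov_adj_exp_eq_0:
  assumes "finite J" "\<And>j. j \<in> J \<Longrightarrow> sq_int M (W j)" "sq_int M f"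
    and "\<And>j. j \<in> J \<Longrightarrow> bl_cov M f (W j) = 0"
  shows "bl_cov M f (adj_exp M J W Y i) = 0"
  unfolding adj_exp_eq_affine using assms by (simp add: bl_cov_affine_right)

lemma bl_cov_annihilates_cov_kernel:
  assumes fin: "finite J" and W: "\<And>j. j \<in> J \<Longrightarrow> sq_int M (W j)" and y: "sq_int M y"
    and v: "\<forall>t\<in>J. (\<Sum>p\<in>J. bl_cov M (W t) (W p) * v p) = 0"
  shows "(\<Sum>p\<in>J. bl_cov M y (W p) * v p) = 0"
proof -
  define h where "h = (\<lambda>\<omega>. 0 + (\<Sum>p\<in>J. v p * W p \<omega>))"
  have h: "sq_int M h" unfolding h_def using fin W by (rule sq_int_affine)
  have cov_h: "bl_cov M f h = (\<Sum>p\<in>J. bl_cov M f (W p) * v p)" if "sq_int M f" for f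
    using bl_cov_affine_right[OF that fin W, where c = 0 and \<gamma> = v] unfolding h_def by (simp add: mult.commute)
  have "bl_cov M h h = (\<Sum>p\<in>J. bl_cov M (W p) h * v p)"
    unfolding cov_h[OF h] by (simp add: bl_cov_commute)
  also have "\<dots> = 0"
    using v by (simp add: cov_h[OF W])
  finally have "bl_cov M y h = 0"
    by (rule bl_cov_eq_0_if_variance_0[OF h y])
  then show ?thesis unfolding cov_h[OF y] .
qed

lemma adj_exp_residual_uncorrelated:
  assumes fin: "finite J" and W: "\<And>j. j \<in> J \<Longrightarrow> sq_int M (W j)" and Y: "sq_int M (Y i)"
    and l: "l \<in> J"
  shows "bl_cov M (\<lambda>\<omega>. Y i \<omega> - adj_exp M J W Y i \<omega>) (W l) = 0"
proof -
  define G where "G = MP_inv J J (cov_matrix M W)"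
  have "symmetric_on J (cov_matrix M W)"
    unfolding symmetric_on_def using bl_cov_commute by blast
  then have "is_MP_inverse J J (cov_matrix M W) G"
    unfolding G_def by (rule finite_index_set.is_MP_inverse_MP_inv[OF finite_index_set.intro[OF fin]])
  then have ginv: "ginverse_on J (cov_matrix M W) G"
    unfolding is_MP_inverse_def ginverse_on_def by blast
  have kernel: "(\<Sum>j\<in>J. bl_cov M (Y i) (W j) * v j) = 0"
    if "\<forall>t\<in>J. (\<Sum>j\<in>J. cov_matrix M W t j * v j) = 0" for v
    using bl_cov_annihilates_cov_kernel[where W = W and y = "Y i", OF fin W Y that] .
  have "bl_cov M (adj_exp M J W Y i) (W l) = (\<Sum>k\<in>J. adj_coeff M J W (Y i) k * bl_cov M (W k) (W l))"
    unfolding adj_exp_eq_affine by (rule bl_cov_affine_left[OF W[OF l] fin W])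
  also have "\<dots> = (\<Sum>j\<in>J. \<Sum>k\<in>J. bl_cov M (Y i) (W j) * G j k * bl_cov M (W k) (W l))"
    unfolding adj_coeff_def G_def[symmetric] sum_distrib_right by (rule sum.swap)
  also have "\<dots> = (\<Sum>j\<in>J. bl_cov M (Y i) (W j) * mmul J G (cov_matrix M W) j l)"
    unfolding mmul_def by (simp add: sum_distrib_left mult.assoc)
  also have "\<dots> = bl_cov M (Y i) (W l)"
    using ginverse_fixes_kernel_annihilator[where C = "\<lambda>p. bl_cov M (Y i) (W p)", OF fin ginv kernel l]
    by simp
  finally show ?thesis
    using bl_cov_diff_left[OF Y sq_int_adj_exp[where W = W and Y = Y and i = i, OF fin W] W[OF l]]
    by simp
qed

lemma adj_exp_mse_le_affine:
  assumes fin: "finite J" and W: "\<And>j. j \<in> J \<Longrightarrow> sq_int M (W j)" and Y: "sq_int M (Y i)"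
  shows "prev M (\<lambda>\<omega>. (Y i \<omega> - adj_exp M J W Y i \<omega>)\<^sup>2)
    \<le> prev M (\<lambda>\<omega>. (Y i \<omega> - (c + (\<Sum>k\<in>J. \<beta> k * W k \<omega>)))\<^sup>2)"
proof -
  define b where "b = adj_coeff M J W (Y i)"
  define c0 where "c0 = prev M (Y i) - (\<Sum>k\<in>J. b k * prev M (W k))"
  define e where "e = (\<lambda>\<omega>. Y i \<omega> - adj_exp M J W Y i \<omega>)"
  define d where "d = (\<lambda>\<omega>. (c0 - c) + (\<Sum>k\<in>J. (b k - \<beta> k) * W k \<omega>))"
  have e: "sq_int M e" unfolding e_def by (rule sq_int_diff[OF Y sq_int_adj_exp[OF fin W]])
  have d: "sq_int M d" unfolding d_def by (rule sq_int_affine[OF fin W])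
  have split: "Y i \<omega> - (c + (\<Sum>k\<in>J. \<beta> k * W k \<omega>)) = e \<omega> + d \<omega>" for \<omega>
    unfolding e_def d_def adj_exp_eq_affine b_def[symmetric] c0_def[symmetric]
    by (simp add: left_diff_distrib sum_subtractf)
  have mean_e: "prev M e = 0"
    using prev_adj_exp[where W = W and Y = Y and i = i, OF fin W] sq_int_integrable[OF Y]
      sq_int_integrable[OF sq_int_adj_exp[where W = W and Y = Y and i = i, OF fin W]]
    unfolding e_def prev_def by simp
  have "bl_cov M e d = (\<Sum>k\<in>J. (b k - \<beta> k) * bl_cov M e (W k))"
    unfolding d_def by (rule bl_cov_affine_right[OF e fin W])
  also have "\<dots> = 0"
    using adj_exp_residual_uncorrelated[where W = W and Y = Y and i = i, OF fin W Y]
    unfolding e_def by simp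
  finally have "prev M (\<lambda>\<omega>. e \<omega> * d \<omega>) = 0"
    using mean_e unfolding bl_cov_def by simp
  then have "prev M (\<lambda>\<omega>. (Y i \<omega> - (c + (\<Sum>k\<in>J. \<beta> k * W k \<omega>)))\<^sup>2)
      = prev M (\<lambda>\<omega>. (e \<omega>)\<^sup>2) + prev M (\<lambda>\<omega>. (d \<omega>)\<^sup>2)"
    unfolding split by (rule prev_square_add_uncorrelated[OF e d])
  moreover have "prev M (\<lambda>\<omega>. (d \<omega>)\<^sup>2) \<ge> 0"
    unfolding prev_def by simp
  ultimately show ?thesis unfolding e_def by simp
qed

lemma adj_exp_mse_le_component:
  assumes "finite J" "\<And>j. j \<in> J \<Longrightarrow> sq_int M (W j)" "sq_int M (Y i)" "k \<in> J"
  shows "prev M (\<lambda>\<omega>. (Y i \<omega> - adj_exp M J W Y i \<omega>)\<^sup>2) \<le> prev M (\<lambda>\<omega>. (Y i \<omega> - W k \<omega>)\<^sup>2)"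
  using adj_exp_mse_le_affine[where W = W and Y = Y and i = i, OF assms(1-3), where c = 0 and \<beta> = "\<lambda>k'. if k' = k then 1 else 0"] assms
  by (simp add: if_distrib[of "\<lambda>x. x * _"] cong: if_cong)

lemma adj_exp_adj_exp_mse_le:
  assumes fin: "finite J" and W: "\<And>j. j \<in> J \<Longrightarrow> sq_int M (W j)" and Y: "sq_int M (Y k)"
    and k: "k \<in> J"
  shows "prev M (\<lambda>\<omega>. (Y k \<omega> - adj_exp M J (adj_exp M J W Y) Y k \<omega>)\<^sup>2)
    \<le> prev M (\<lambda>\<omega>. (Y k \<omega> - W k \<omega>)\<^sup>2)"
proof -
  have "prev M (\<lambda>\<omega>. (Y k \<omega> - adj_exp M J (adj_exp M J W Y) Y k \<omega>)\<^sup>2)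
      \<le> prev M (\<lambda>\<omega>. (Y k \<omega> - adj_exp M J W Y k \<omega>)\<^sup>2)"
    using sq_int_adj_exp[where W = W and Y = Y, OF fin W]
    by (intro adj_exp_mse_le_component[where W = "adj_exp M J W Y" and Y = Y and i = k, OF fin _ Y k])
  also have "\<dots> \<le> prev M (\<lambda>\<omega>. (Y k \<omega> - W k \<omega>)\<^sup>2)"
    by (rule adj_exp_mse_le_component[where W = W and Y = Y and i = k, OF fin W Y k])
  finally show ?thesis .
qed

lemma adj_exp_linear_plus_uncorrelated:
  assumes fin: "finite J" and W: "\<And>j. j \<in> J \<Longrightarrow> sq_int M (W j)" and K: "finite K"
    and Y: "\<And>k. k \<in> K \<Longrightarrow> sq_int M (Y k)" and U: "sq_int M U"
    and UW: "\<And>j. j \<in> J \<Longrightarrow> bl_cov M U (W j) = 0"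
    and X: "\<And>\<omega>. \<omega> \<in> space M \<Longrightarrow> X x \<omega> = (\<Sum>k\<in>K. a k * Y k \<omega>) + U \<omega>"
  shows "adj_exp M J W X x \<omega> = prev M U + (\<Sum>k\<in>K. a k * adj_exp M J W Y k \<omega>)"
proof -
  have "prev M (X x) = prev M (\<lambda>\<omega>. (0 + (\<Sum>k\<in>K. a k * Y k \<omega>)) + U \<omega>)"
    using X unfolding prev_def by (intro Bochner_Integration.integral_cong) auto
  also have "\<dots> = (\<Sum>k\<in>K. a k * prev M (Y k)) + prev M U"
    using prev_affine[OF K sq_int_integrable[OF Y], where c = 0 and \<gamma> = a] sq_int_integrable[OF U]
      sq_int_integrable[OF sq_int_affine[OF K Y, where c = 0 and \<gamma> = a]]
    unfolding prev_def by simp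
  finally have prev_X: "prev M (X x) = prev M U + (\<Sum>k\<in>K. a k * prev M (Y k))" by simp
  have cov_X: "bl_cov M (X x) (W j) = (\<Sum>k\<in>K. a k * bl_cov M (Y k) (W j))" if j: "j \<in> J" for j
  proof -
    have "bl_cov M (X x) (W j) = bl_cov M (\<lambda>\<omega>. (0 + (\<Sum>k\<in>K. a k * Y k \<omega>)) + U \<omega>) (W j)"
      by (rule bl_cov_cong) (simp_all add: X)
    also have "\<dots> = bl_cov M (\<lambda>\<omega>. 0 + (\<Sum>k\<in>K. a k * Y k \<omega>)) (W j) + bl_cov M U (W j)"
      by (rule bl_cov_add_left[OF sq_int_affine[OF K Y] U W[OF j]])
    finally show ?thesis
      using bl_cov_affine_left[OF W[OF j] K Y, where c = 0 and \<gamma> = a] UW[OF j] by simp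
  qed
  have coeff_X: "adj_coeff M J W (X x) l = (\<Sum>k\<in>K. a k * adj_coeff M J W (Y k) l)" for l
  proof -
    have "adj_coeff M J W (X x) l
        = (\<Sum>j\<in>J. \<Sum>k\<in>K. a k * bl_cov M (Y k) (W j) * MP_inv J J (cov_matrix M W) j l)"
      unfolding adj_coeff_def by (intro sum.cong refl) (simp add: cov_X sum_distrib_right)
    then show ?thesis
      unfolding adj_coeff_def by (subst (asm) sum.swap) (simp add: sum_distrib_left mult.assoc)
  qed
  have "adj_exp M J W X x \<omega> = prev M U + (\<Sum>k\<in>K. a k * prev M (Y k))
      + (\<Sum>l\<in>J. \<Sum>k\<in>K. a k * adj_coeff M J W (Y k) l * (W l \<omega> - prev M (W l)))"
    unfolding adj_exp_eq prev_X coeff_X by (simp add: sum_distrib_right)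
  also have "\<dots> = prev M U + (\<Sum>k\<in>K. a k * adj_exp M J W Y k \<omega>)"
    unfolding adj_exp_eq by (subst sum.swap) (simp add: sum.distrib distrib_left sum_distrib_left mult.assoc)
  finally show ?thesis .
qed

end

section \<open>The replicated means model\<close>

lemma convergence_of_uniform_rate:
  fixes f :: "(nat \<Rightarrow> nat) \<Rightarrow> real"
  assumes C: "0 \<le> C" and rate: "\<And>n N. 1 \<le> N \<Longrightarrow> \<forall>i<m. N \<le> n i \<Longrightarrow> f n \<le> C / real N"
  shows "\<forall>\<epsilon>>0. \<exists>N. \<forall>n. (\<forall>i<m. N \<le> n i) \<longrightarrow> f n < \<epsilon>"
proof (intro allI impI)
  fix \<epsilon> :: real assume \<epsilon>: "0 < \<epsilon>"
  obtain N :: nat where N: "C / \<epsilon> < real N"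
    using reals_Archimedean2 by blast
  have "0 < real N"
    using divide_nonneg_pos[OF C \<epsilon>] N by linarith
  then have "1 \<le> N" and "C / real N < \<epsilon>"
    using N \<epsilon> by (simp_all add: pos_divide_less_eq mult.commute)
  then show "\<exists>N. \<forall>n. (\<forall>i<m. N \<le> n i) \<longrightarrow> f n < \<epsilon>"
    using rate le_less_trans by blast
qed

locale replicated_means_model = prob_space M
  for M :: "'a measure" +
  fixes m :: nat
    and D :: "nat \<Rightarrow> 'c set"
    and mu :: "nat \<Rightarrow> 'c \<Rightarrow> 'a \<Rightarrow> real"
    and Z :: "nat \<Rightarrow> nat \<Rightarrow> 'c \<Rightarrow> 'a \<Rightarrow> real"
    and XI :: "'x set"
    and X U :: "'x \<Rightarrow> 'a \<Rightarrow> real"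
    and A :: "'x \<Rightarrow> nat \<times> 'c \<Rightarrow> real"
  assumes finD: "\<And>i. i < m \<Longrightarrow> finite (D i)"
    and finXI: "finite XI"
    and L2_mu: "\<And>i c. i < m \<Longrightarrow> c \<in> D i \<Longrightarrow> sq_int M (mu i c)"
    and L2_Z: "\<And>i j c. i < m \<Longrightarrow> 1 \<le> j \<Longrightarrow> c \<in> D i \<Longrightarrow> sq_int M (Z i j c)"
    and L2_U: "\<And>x. x \<in> XI \<Longrightarrow> sq_int M (U x)"
    and R_mean: "\<And>i j c. i < m \<Longrightarrow> 1 \<le> j \<Longrightarrow> c \<in> D i \<Longrightarrow>
                   prev M (\<lambda>\<omega>. Z i j c \<omega> - mu i c \<omega>) = 0"
    and R_R: "\<And>i j c k l c'. i < m \<Longrightarrow> 1 \<le> j \<Longrightarrow> c \<in> D i \<Longrightarrow> k < m \<Longrightarrow> 1 \<le> l \<Longrightarrow> c' \<in> D k \<Longrightarrow>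
                 (i, j) \<noteq> (k, l) \<Longrightarrow>
                 bl_cov M (\<lambda>\<omega>. Z i j c \<omega> - mu i c \<omega>) (\<lambda>\<omega>. Z k l c' \<omega> - mu k c' \<omega>) = 0"
    and R_var: "\<And>i j c c'. i < m \<Longrightarrow> 1 \<le> j \<Longrightarrow> c \<in> D i \<Longrightarrow> c' \<in> D i \<Longrightarrow>
                 bl_cov M (\<lambda>\<omega>. Z i j c \<omega> - mu i c \<omega>) (\<lambda>\<omega>. Z i j c' \<omega> - mu i c' \<omega>)
               = bl_cov M (\<lambda>\<omega>. Z i 1 c \<omega> - mu i c \<omega>) (\<lambda>\<omega>. Z i 1 c' \<omega> - mu i c' \<omega>)"
    and X_def: "\<And>x \<omega>. x \<in> XI \<Longrightarrow> \<omega> \<in> space M \<Longrightarrow>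
                 X x \<omega> = (\<Sum>(i, c)\<in>Sigma {..<m} D. A x (i, c) * mu i c \<omega>) + U x \<omega>"
    and U_mu: "\<And>x i c. x \<in> XI \<Longrightarrow> i < m \<Longrightarrow> c \<in> D i \<Longrightarrow> bl_cov M (U x) (mu i c) = 0"
    and U_R: "\<And>x i j c. x \<in> XI \<Longrightarrow> i < m \<Longrightarrow> 1 \<le> j \<Longrightarrow> c \<in> D i \<Longrightarrow>
                 bl_cov M (U x) (\<lambda>\<omega>. Z i j c \<omega> - mu i c \<omega>) = 0"
begin

definition idx :: "(nat \<times> 'c) set" where
  "idx = Sigma {..<m} D"

definition mu_vec :: "nat \<times> 'c \<Rightarrow> 'a \<Rightarrow> real" where
  "mu_vec = (\<lambda>(i, c). mu i c)"

definition sample_mean :: "(nat \<Rightarrow> nat) \<Rightarrow> nat \<times> 'c \<Rightarrow> 'a \<Rightarrow> real" where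
  "sample_mean n = (\<lambda>(i, c) \<omega>. (\<Sum>j = 1..n i. Z i j c \<omega>) / real (n i))"

lemma finite_idx: "finite idx"
  unfolding idx_def using finD by (intro finite_SigmaI) auto

lemma idxD: "k \<in> idx \<Longrightarrow> fst k < m \<and> snd k \<in> D (fst k)"
  unfolding idx_def by auto

lemma sq_int_mu_vec: "k \<in> idx \<Longrightarrow> sq_int M (mu_vec k)"
  using L2_mu unfolding mu_vec_def by (auto simp: case_prod_beta dest: idxD)

lemma sq_int_sample_mean: "k \<in> idx \<Longrightarrow> sq_int M (sample_mean n k)"
  unfolding sample_mean_def case_prod_beta
  by (intro sq_int_scale[where c = "1 / _", simplified] sq_int_sum L2_Z) (auto dest: idxD)

definition resid_var :: "nat \<Rightarrow> 'c \<Rightarrow> real" where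
  "resid_var i c = bl_cov M (\<lambda>\<omega>. Z i 1 c \<omega> - mu i c \<omega>) (\<lambda>\<omega>. Z i 1 c \<omega> - mu i c \<omega>)"

lemma resid_var_nonneg:
  assumes "i < m" "c \<in> D i"
  shows "0 \<le> resid_var i c"
proof -
  have "resid_var i c = prev M (\<lambda>\<omega>. (Z i 1 c \<omega> - mu i c \<omega>)\<^sup>2)"
    using R_mean[OF assms(1) _ assms(2), of 1] unfolding resid_var_def bl_cov_def
    by (simp add: power2_eq_square)
  then show ?thesis unfolding prev_def by simp
qed

lemma sample_mean_mse:
  assumes i: "i < m" and c: "c \<in> D i" and n: "1 \<le> n"
  shows "prev M (\<lambda>\<omega>. (mu i c \<omega> - (\<Sum>j = 1..n. Z i j c \<omega>) / real n)\<^sup>2) = resid_var i c / real n"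
proof -
  define R where "R j = (\<lambda>\<omega>. Z i j c \<omega> - mu i c \<omega>)" for j
  have "prev M (\<lambda>\<omega>. (\<Sum>j = 1..n. R j \<omega>)\<^sup>2) = real (card {1..n}) * resid_var i c"
  proof (rule prev_square_sum_uncorrelated)
    show "sq_int M (R j)" if "j \<in> {1..n}" for j
      using that unfolding R_def by (intro sq_int_diff L2_Z[OF i _ c] L2_mu[OF i c]) auto
    show "prev M (R j) = 0" if "j \<in> {1..n}" for j
      using that R_mean[OF i _ c] unfolding R_def by simp
    show "bl_cov M (R j) (R l) = 0" if "j \<in> {1..n}" "l \<in> {1..n}" "j \<noteq> l" for j l
      using that R_R[OF i _ c i _ c] unfolding R_def by simp
    show "bl_cov M (R j) (R j) = resid_var i c" if "j \<in> {1..n}" for j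
      using that unfolding R_def resid_var_def by (intro R_var[OF i _ c c]) simp
  qed simp
  moreover have "mu i c \<omega> - (\<Sum>j = 1..n. Z i j c \<omega>) / real n = - (\<Sum>j = 1..n. R j \<omega>) / real n" for \<omega>
  proof -
    have "(\<Sum>j = 1..n. Z i j c \<omega>) = (\<Sum>j = 1..n. R j \<omega>) + real n * mu i c \<omega>"
      unfolding R_def by (simp add: sum_subtractf)
    then show ?thesis using n by (simp add: field_simps)
  qed
  ultimately show ?thesis
    using n unfolding prev_def by (simp add: power_divide power2_eq_square)
qed

lemma bl_cov_U_sample_mean:
  assumes x: "x \<in> XI" and i: "i < m" and c: "c \<in> D i"
  shows "bl_cov M (U x) (\<lambda>\<omega>. (\<Sum>j = 1..n. Z i j c \<omega>) / real n) = 0"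
proof -
  have "bl_cov M (U x) (Z i j c) = 0" if j: "1 \<le> j" for j
  proof -
    have "bl_cov M (Z i j c) (U x) = bl_cov M (\<lambda>\<omega>. (Z i j c \<omega> - mu i c \<omega>) + mu i c \<omega>) (U x)"
      by simp
    also have "\<dots> = bl_cov M (\<lambda>\<omega>. Z i j c \<omega> - mu i c \<omega>) (U x) + bl_cov M (mu i c) (U x)"
      using L2_Z[OF i j c] L2_mu[OF i c] L2_U[OF x] by (intro bl_cov_add_left sq_int_diff)
    also have "\<dots> = 0"
      using U_R[OF x i j c] U_mu[OF x i c] by (simp add: bl_cov_commute)
    finally show ?thesis by (simp add: bl_cov_commute)
  qed
  moreover have "bl_cov M (U x) (\<lambda>\<omega>. 0 + (\<Sum>j\<in>{1..n}. 1 / real n * Z i j c \<omega>))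
      = (\<Sum>j\<in>{1..n}. 1 / real n * bl_cov M (U x) (Z i j c))"
    using L2_U[OF x] L2_Z[OF i _ c] by (intro bl_cov_affine_right) auto
  ultimately show ?thesis by (simp add: sum_divide_distrib)
qed


lemma prediction_error_eq:
  fixes n :: "nat \<Rightarrow> nat"
  assumes x: "x \<in> XI"
  defines "W \<equiv> adj_exp M idx (sample_mean n) mu_vec"
  shows "adj_exp M idx W X x \<omega> - ((\<Sum>k\<in>idx. A x k * mu_vec k \<omega>) + prev M (U x))
    = (\<Sum>k\<in>idx. A x k * (adj_exp M idx W mu_vec k \<omega> - mu_vec k \<omega>))"
proof -
  have "bl_cov M (U x) (W j) = 0" for j
    unfolding W_def using finite_idx sq_int_sample_mean L2_U[OF x]
    by (rule bl_cov_adj_exp_eq_0) (use bl_cov_U_sample_mean[OF x] in \<open>auto simp: sample_mean_def idx_def\<close>)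
  then have "adj_exp M idx W X x \<omega> = prev M (U x) + (\<Sum>k\<in>idx. A x k * adj_exp M idx W mu_vec k \<omega>)"
    using X_def[OF x] unfolding W_def
    by (intro adj_exp_linear_plus_uncorrelated[OF finite_idx _ finite_idx sq_int_mu_vec L2_U[OF x]]
        sq_int_adj_exp[OF finite_idx sq_int_sample_mean])
      (simp_all add: idx_def mu_vec_def case_prod_beta)
  then show ?thesis
    by (simp add: right_diff_distrib sum_subtractf)
qed

lemma twice_adjusted_mean_mse_le:
  assumes k: "k \<in> idx" and N: "1 \<le> N" and n: "\<forall>i<m. N \<le> n i"
  defines "W \<equiv> adj_exp M idx (sample_mean n) mu_vec"
  shows "prev M (\<lambda>\<omega>. (adj_exp M idx W mu_vec k \<omega> - mu_vec k \<omega>)\<^sup>2) \<le> resid_var (fst k) (snd k) / real N"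
proof -
  have "prev M (\<lambda>\<omega>. (adj_exp M idx W mu_vec k \<omega> - mu_vec k \<omega>)\<^sup>2)
      = prev M (\<lambda>\<omega>. (mu_vec k \<omega> - adj_exp M idx W mu_vec k \<omega>)\<^sup>2)"
    by (simp add: power2_commute)
  also have "\<dots> \<le> prev M (\<lambda>\<omega>. (mu_vec k \<omega> - sample_mean n k \<omega>)\<^sup>2)"
    unfolding W_def
    by (rule adj_exp_adj_exp_mse_le[where W = "sample_mean n" and Y = mu_vec and k = k,
          OF finite_idx sq_int_sample_mean sq_int_mu_vec[OF k] k])
  also have "\<dots> = resid_var (fst k) (snd k) / real (n (fst k))"
    using sample_mean_mse[of "fst k" "snd k" "n (fst k)"] idxD[OF k] le_trans[OF N] n
    unfolding mu_vec_def sample_mean_def by (simp add: case_prod_beta)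
  also have "\<dots> \<le> resid_var (fst k) (snd k) / real N"
    using resid_var_nonneg idxD[OF k] N n by (intro divide_left_mono) auto
  finally show ?thesis .
qed

lemma adjusted_prediction_mse_le:
  assumes N: "1 \<le> N" and n: "\<forall>i<m. N \<le> n i"
  shows "prev M (\<lambda>\<omega>. \<Sum>x\<in>XI. (adj_exp M idx (adj_exp M idx (sample_mean n) mu_vec) X x \<omega>
            - ((\<Sum>k\<in>idx. A x k * mu_vec k \<omega>) + prev M (U x)))\<^sup>2)
    \<le> (\<Sum>x\<in>XI. \<Sum>k\<in>idx. (A x k)\<^sup>2) * (\<Sum>(i, c)\<in>idx. resid_var i c) / real N"
proof -
  define W where "W = adj_exp M idx (sample_mean n) mu_vec"
  define d where "d k \<omega> = adj_exp M idx W mu_vec k \<omega> - mu_vec k \<omega>" for k \<omega>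
  have "prev M (\<lambda>\<omega>. \<Sum>x\<in>XI. (adj_exp M idx W X x \<omega> - ((\<Sum>k\<in>idx. A x k * mu_vec k \<omega>) + prev M (U x)))\<^sup>2)
      = prev M (\<lambda>\<omega>. \<Sum>x\<in>XI. (\<Sum>k\<in>idx. A x k * d k \<omega>)\<^sup>2)"
    unfolding d_def W_def by (simp add: prediction_error_eq)
  also have "\<dots> \<le> (\<Sum>x\<in>XI. \<Sum>k\<in>idx. (A x k)\<^sup>2) * (\<Sum>k\<in>idx. prev M (\<lambda>\<omega>. (d k \<omega>)\<^sup>2))"
    unfolding d_def W_def
    by (intro prev_sum_square_lincomb_le finXI finite_idx sq_int_diff sq_int_mu_vec
        sq_int_adj_exp[OF finite_idx] sq_int_adj_exp[OF finite_idx sq_int_sample_mean])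
  also have "\<dots> \<le> (\<Sum>x\<in>XI. \<Sum>k\<in>idx. (A x k)\<^sup>2) * (\<Sum>k\<in>idx. resid_var (fst k) (snd k) / real N)"
    unfolding d_def W_def using twice_adjusted_mean_mse_le[OF _ N n]
    by (intro mult_left_mono sum_mono sum_nonneg) auto
  finally show ?thesis
    unfolding W_def by (simp add: sum_divide_distrib[symmetric] split_def)
qed

theorem adjusted_prediction_converges:
  "\<forall>\<epsilon>>0. \<exists>N. \<forall>n :: nat \<Rightarrow> nat. (\<forall>i<m. N \<le> n i) \<longrightarrow>
           (let K = Sigma {..<m} D;
                muvec = (\<lambda>(i, c). mu i c);
                Zbar = (\<lambda>(i, c) \<omega>. (\<Sum>j = 1..n i. Z i j c \<omega>) / real (n i));
                ZZ = adj_exp M K Zbar muvec;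
                PX = adj_exp M K ZZ X
            in prev M (\<lambda>\<omega>. \<Sum>x\<in>XI. (PX x \<omega> - ((\<Sum>k\<in>K. A x k * muvec k \<omega>) + prev M (U x)))\<^sup>2) < \<epsilon>)"
  unfolding Let_def
proof (rule convergence_of_uniform_rate)
  show "0 \<le> (\<Sum>x\<in>XI. \<Sum>k\<in>Sigma {..<m} D. (A x k)\<^sup>2) * (\<Sum>(i, c)\<in>Sigma {..<m} D. resid_var i c)"
    using resid_var_nonneg by (intro mult_nonneg_nonneg sum_nonneg) auto
qed (use adjusted_prediction_mse_le in \<open>simp add: idx_def mu_vec_def sample_mean_def\<close>)

end

theorem lemma3p2:
  fixes M :: "'a measure"
    and m :: nat
    and D :: "nat \<Rightarrow> 'c set"
    and mu :: "nat \<Rightarrow> 'c \<Rightarrow> 'a \<Rightarrow> real"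
    and Z :: "nat \<Rightarrow> nat \<Rightarrow> 'c \<Rightarrow> 'a \<Rightarrow> real"
    and XI :: "'x set"
    and X U :: "'x \<Rightarrow> 'a \<Rightarrow> real"
    and A :: "'x \<Rightarrow> nat \<times> 'c \<Rightarrow> real"
  assumes M: "prob_space M"
    and finD: "\<And>i. i < m \<Longrightarrow> finite (D i)"
    and finXI: "finite XI"
    and L2_mu: "\<And>i c. i < m \<Longrightarrow> c \<in> D i \<Longrightarrow> sq_int M (mu i c)"
    and L2_Z: "\<And>i j c. i < m \<Longrightarrow> 1 \<le> j \<Longrightarrow> c \<in> D i \<Longrightarrow> sq_int M (Z i j c)"
    and L2_U: "\<And>x. x \<in> XI \<Longrightarrow> sq_int M (U x)"
    and R_mean: "\<And>i j c. i < m \<Longrightarrow> 1 \<le> j \<Longrightarrow> c \<in> D i \<Longrightarrow>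
                   prev M (\<lambda>\<omega>. Z i j c \<omega> - mu i c \<omega>) = 0"
    and R_mu: "\<And>i j c k c'. i < m \<Longrightarrow> 1 \<le> j \<Longrightarrow> c \<in> D i \<Longrightarrow> k < m \<Longrightarrow> c' \<in> D k \<Longrightarrow>
                 bl_cov M (\<lambda>\<omega>. Z i j c \<omega> - mu i c \<omega>) (mu k c') = 0"
    and R_R: "\<And>i j c k l c'. i < m \<Longrightarrow> 1 \<le> j \<Longrightarrow> c \<in> D i \<Longrightarrow> k < m \<Longrightarrow> 1 \<le> l \<Longrightarrow> c' \<in> D k \<Longrightarrow>
                 (i, j) \<noteq> (k, l) \<Longrightarrow>
                 bl_cov M (\<lambda>\<omega>. Z i j c \<omega> - mu i c \<omega>) (\<lambda>\<omega>. Z k l c' \<omega> - mu k c' \<omega>) = 0"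
    and R_var: "\<And>i j c c'. i < m \<Longrightarrow> 1 \<le> j \<Longrightarrow> c \<in> D i \<Longrightarrow> c' \<in> D i \<Longrightarrow>
                 bl_cov M (\<lambda>\<omega>. Z i j c \<omega> - mu i c \<omega>) (\<lambda>\<omega>. Z i j c' \<omega> - mu i c' \<omega>)
               = bl_cov M (\<lambda>\<omega>. Z i 1 c \<omega> - mu i c \<omega>) (\<lambda>\<omega>. Z i 1 c' \<omega> - mu i c' \<omega>)"
    and X_def: "\<And>x \<omega>. x \<in> XI \<Longrightarrow> \<omega> \<in> space M \<Longrightarrow>
                 X x \<omega> = (\<Sum>(i, c)\<in>Sigma {..<m} D. A x (i, c) * mu i c \<omega>) + U x \<omega>"
    and U_mu: "\<And>x i c. x \<in> XI \<Longrightarrow> i < m \<Longrightarrow> c \<in> D i \<Longrightarrow> bl_cov M (U x) (mu i c) = 0"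
    and U_R: "\<And>x i j c. x \<in> XI \<Longrightarrow> i < m \<Longrightarrow> 1 \<le> j \<Longrightarrow> c \<in> D i \<Longrightarrow>
                 bl_cov M (U x) (\<lambda>\<omega>. Z i j c \<omega> - mu i c \<omega>) = 0"
  shows "\<forall>\<epsilon>>0. \<exists>N. \<forall>n :: nat \<Rightarrow> nat. (\<forall>i<m. N \<le> n i) \<longrightarrow>
           (let K = Sigma {..<m} D;
                muvec = (\<lambda>(i, c). mu i c);
                Zbar = (\<lambda>(i, c) \<omega>. (\<Sum>j = 1..n i. Z i j c \<omega>) / real (n i));
                ZZ = adj_exp M K Zbar muvec;
                PX = adj_exp M K ZZ X
            in prev M (\<lambda>\<omega>. \<Sum>x\<in>XI. (PX x \<omega> - ((\<Sum>k\<in>K. A x k * muvec k \<omega>) + prev M (U x)))\<^sup>2) < \<epsilon>)"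
proof -
  interpret replicated_means_model M m D mu Z XI X U A
    by (rule replicated_means_model.intro[OF M], unfold_locales) (fact assms)+
  show ?thesis by (rule adjusted_prediction_converges)
qed

end
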